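(* Let $d\ge 1$ and $k'$ be integers with $k'>2d+3$. Consider an average-based EQ AHG or an average-based AL AHG over $n$ players with $n\ge k'(d+1)$, whose network of friends $G$ contains a (possibly pinched) $(d,k')$-dome gadget on a player set $P$, such that no player of $P$ other than its top player $p^\star$ has a friend outside $P$. Let $\Gamma$ be a coalition structure with $P\in\Gamma$. If a coalition $C$ blocks $\Gamma$, then $C$ contains no player of the base clique of the gadget.
   Context: An AHG is given by a finite player set $N$, $n=|N|$, and a simple undirected graph $G=(N,\mathcal{E})$ (network of friends). For $i\in N$, $F_i$ is the set of neighbors (friends) of $i$ and $E_i=N\setminus(F_i\cup\{i\})$ its enemies. For a coalition $C\ni i$, $\mathrm{val}_i(C)=n|F_i\cap C|-|E_i\cap C|$. Let $\mathrm{avg}_{F_i}(C)=\sum_{c\in C\cap F_i}\mathrm{val}_c(C)/|C\cap F_i|$ (taken to be $0$ if $C\cap F_i=\emptyset$) and $\mathrm{avg}_{F_i\cup\{i\}}(C)=\sum_{c\in (C\cap F_i)\cup\{i\}}\mathrm{val}_c(C)/|(C\cap F_i)\cup\{i\}|$. With a fixed constant $w\ge n^4$, the average-based EQ utility is $\mathrm{util}_i^{\text{avg-EQ}}(C)=\mathrm{avg}_{F_i\cup\{i\}}(C)$ and the average-based AL utility is $\mathrm{util}_i^{\text{avg-AL}}(C)=\mathrm{val}_i(C)+w\cdot\mathrm{avg}_{F_i}(C)$. A coalition structure is a partition $\Gamma$ of $N$; $\Gamma(i)$ is the coalition containing $i$. A nonempty coalition $C$ blocks $\Gamma$ if every $i\in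 C$ has strictly larger utility from $C$ than from $\Gamma(i)$. A $(d,k')$-dome gadget (for integers $d\ge1$, $k'>2d+1$) on player set $P$ with $|P|=k'$ consists of a top player $p^\star$, $d$ mid players $p_1,\dots,p_d$, and the remaining $k'-d-1$ players forming the base clique $K$; $d$ distinct players $p'_1,\dots,p'_d\in K$ are called fringe players. The friendships among players of $P$ are exactly: $p^\star$ with each $p_j$, $p_j$ with $p'_j$ for each $j$, and every pair of players in $K$. A pinched $(d,k')$-dome gadget is obtained from a $(d,k')$-dome gadget by identifying all $d$ mid players into a single mid player $q$; so its friendships within $P$ are exactly $p^\star$ with $q$, $q$ with each $p'_j$, and every pair within the base clique $K$ (of size $k'-d-1$). "$G$ contains the gadget on $P$" means $G[P]$ is exactly this gadget. *)

theory Defs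
  imports Complex_Main "HOL-Library.Disjoint_Sets"
begin

definition friends :: "'a set \<Rightarrow> ('a \<Rightarrow> 'a \<Rightarrow> bool) \<Rightarrow> 'a \<Rightarrow> 'a set" where
  "friends N E i = {j \<in> N. E i j}"

definition enemies :: "'a set \<Rightarrow> ('a \<Rightarrow> 'a \<Rightarrow> bool) \<Rightarrow> 'a \<Rightarrow> 'a set" where
  "enemies N E i = N - (friends N E i \<union> {i})"

definition val :: "'a set \<Rightarrow> ('a \<Rightarrow> 'a \<Rightarrow> bool) \<Rightarrow> 'a \<Rightarrow> 'a set \<Rightarrow> real" where
  "val N E i C = real (card N) * real (card (friends N E i \<inter> C))
                 - real (card (enemies N E i \<inter> C))"

definition avg_F :: "'a set \<Rightarrow> ('a \<Rightarrow> 'a \<Rightarrow> bool) \<Rightarrow> 'a \<Rightarrow> 'a set \<Rightarrow> real" where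
  "avg_F N E i C = (if C \<inter> friends N E i = {} then 0
     else (\<Sum>c \<in> C \<inter> friends N E i. val N E c C) / real (card (C \<inter> friends N E i)))"

definition avg_Fi :: "'a set \<Rightarrow> ('a \<Rightarrow> 'a \<Rightarrow> bool) \<Rightarrow> 'a \<Rightarrow> 'a set \<Rightarrow> real" where
  "avg_Fi N E i C = (\<Sum>c \<in> insert i (C \<inter> friends N E i). val N E c C)
                     / real (card (insert i (C \<inter> friends N E i)))"

definition util_avgEQ :: "'a set \<Rightarrow> ('a \<Rightarrow> 'a \<Rightarrow> bool) \<Rightarrow> 'a \<Rightarrow> 'a set \<Rightarrow> real" where
  "util_avgEQ N E i C = avg_Fi N E i C"

definition util_avgAL :: "'a set \<Rightarrow> ('a \<Rightarrow> 'a \<Rightarrow> bool) \<Rightarrow> real \<Rightarrow> 'a \<Rightarrow> 'a set \<Rightarrow> real" where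
  "util_avgAL N E w i C = val N E i C + w * avg_F N E i C"

definition coal_of :: "'a set set \<Rightarrow> 'a \<Rightarrow> 'a set" where
  "coal_of \<Gamma> i = (THE S. S \<in> \<Gamma> \<and> i \<in> S)"

definition blocks :: "'a set \<Rightarrow> ('a \<Rightarrow> 'a set \<Rightarrow> real) \<Rightarrow> 'a set set \<Rightarrow> 'a set \<Rightarrow> bool" where
  "blocks N util \<Gamma> C \<longleftrightarrow> C \<noteq> {} \<and> C \<subseteq> N \<and>
     (\<forall>i \<in> C. util i C > util i (coal_of \<Gamma> i))"

text \<open>(d,k')-dome gadget on P with top p, mid players m 1..m d, base clique K,
  fringe players fr 1..fr d.\<close>
definition dome_gadget :: "'a set \<Rightarrow> ('a \<Rightarrow> 'a \<Rightarrow> bool) \<Rightarrow> nat \<Rightarrow> nat \<Rightarrow> 'a set \<Rightarrow> 'a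
    \<Rightarrow> (nat \<Rightarrow> 'a) \<Rightarrow> 'a set \<Rightarrow> (nat \<Rightarrow> 'a) \<Rightarrow> bool" where
  "dome_gadget N E d k' P p m K fr \<longleftrightarrow>
     d \<ge> 1 \<and> k' > 2*d+1 \<and> P \<subseteq> N \<and> card P = k' \<and> p \<in> P \<and>
     inj_on m {1..d} \<and> m ` {1..d} \<subseteq> P \<and> p \<notin> m ` {1..d} \<and>
     K = P - {p} - m ` {1..d} \<and>
     inj_on fr {1..d} \<and> fr ` {1..d} \<subseteq> K \<and>
     (\<forall>x\<in>P. \<forall>y\<in>P. E x y \<longleftrightarrow>
        ((\<exists>j\<in>{1..d}. {x,y} = {p, m j} \<or> {x,y} = {m j, fr j}) \<or>
         (x \<in> K \<and> y \<in> K \<and> x \<noteq> y)))"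

text \<open>pinched (d,k')-dome gadget: the d mid players identified into one mid player q;
  the base clique K still has k'-d-1 players.\<close>
definition pinched_dome_gadget :: "'a set \<Rightarrow> ('a \<Rightarrow> 'a \<Rightarrow> bool) \<Rightarrow> nat \<Rightarrow> nat \<Rightarrow> 'a set
    \<Rightarrow> 'a \<Rightarrow> 'a \<Rightarrow> 'a set \<Rightarrow> (nat \<Rightarrow> 'a) \<Rightarrow> bool" where
  "pinched_dome_gadget N E d k' P p q K fr \<longleftrightarrow>
     d \<ge> 1 \<and> k' > 2*d+1 \<and> P \<subseteq> N \<and> finite K \<and> card K = k' - d - 1 \<and>
     p \<noteq> q \<and> p \<notin> K \<and> q \<notin> K \<and> P = insert p (insert q K) \<and>
     inj_on fr {1..d} \<and> fr ` {1..d} \<subseteq> K \<and>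
     (\<forall>x\<in>P. \<forall>y\<in>P. E x y \<longleftrightarrow>
        ({x,y} = {p, q} \<or> (\<exists>j\<in>{1..d}. {x,y} = {q, fr j}) \<or>
         (x \<in> K \<and> y \<in> K \<and> x \<noteq> y)))"

end

theory Submission
  imports Defs
begin

(* A base player y judges a coalition by the average value of its friends there (including y
   itself for the EQ utility). In P each base player has about |K| - 1 friends, each worth n, so
   these averages are about n (|K| - 1). Let C block and meet K. If C misses part of K, then a
   non-fringe base player of C sees in C only base players worth at most n (|K| - 1), and if
   all base players of C are fringe players, they see values at most n (d + 1); in both cases
   the average in P is larger, so K is contained in C. A mid player missing from C costs its
   fringe friend a friend worth n, which lowers the average of a non-fringe base player, and a
   missing top player costs the mid players n, which lowers the average of a fringe player.
   Hence P is contained in C, but then the friend groups of base players are unchanged and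
   their values can only drop. For the AL utility the averages are fractions with denominators
   at most |K|, so a strict drop is at least 1 / |K|^2, which the weight w >= n^4 turns into a
   loss exceeding any change of the player's own value. *)

(* The average over an empty (or infinite) set is 0, as x / 0 = 0. *)
definition avg :: "('a \<Rightarrow> real) \<Rightarrow> 'a set \<Rightarrow> real" where
  "avg f T = sum f T / real (card T)"

lemma avg_le_bound:
  assumes "\<And>c. c \<in> T \<Longrightarrow> f c \<le> B" "0 \<le> B"
  shows "avg f T \<le> B"
proof (cases "card T = 0")
  case False
  have "sum f T \<le> real (card T) * B" using assms(1) by (rule sum_bounded_above)
  then show ?thesis using False by (simp add: avg_def divide_le_eq mult.commute)
qed (simp add: avg_def assms(2))

lemma sum_eq_0_if_card_0: "card T = 0 \<Longrightarrow> sum f T = 0"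
  by (cases "finite T") auto

lemma avg_gt_bound:
  assumes "real (card T) * B < sum f T"
  shows "B < avg f T"
proof -
  have "card T \<noteq> 0"
  proof
    assume "card T = 0"
    then show False using assms by (simp add: sum_eq_0_if_card_0)
  qed
  then show ?thesis using assms by (simp add: avg_def less_divide_eq mult.commute)
qed

lemma avg_mono:
  assumes "sum f T \<le> sum g T"
  shows "avg f T \<le> avg g T"
  using assms by (simp add: avg_def divide_right_mono)

lemma avg_strict_mono:
  assumes "sum f T < sum g T"
  shows "avg f T < avg g T"
proof -
  have "card T \<noteq> 0"
  proof
    assume "card T = 0"
    then show False using assms by (simp add: sum_eq_0_if_card_0)
  qed
  then show ?thesis using assms by (simp add: avg_def divide_strict_right_mono)
qed

lemma avg_Ints_eq_fraction:
  assumes "\<And>c. c \<in> T \<Longrightarrow> f c \<in> \<int>" "card T \<le> B" "1 \<le> B"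
  obtains a b :: int where "1 \<le> b" "b \<le> int B" "avg f T = of_int a / of_int b"
proof (cases "card T = 0")
  case True
  then show ?thesis using that[of 1 0] assms(3) by (simp add: avg_def)
next
  case False
  obtain a where "sum f T = of_int a" using Ints_sum[of T f] assms(1) by (auto elim: Ints_cases)
  then show ?thesis using that[of "int (card T)" a] False assms(2) by (simp add: avg_def)
qed

lemma fraction_gap:
  fixes a b c e :: int and B :: real
  assumes "1 \<le> b" "1 \<le> e" "of_int b \<le> B" "of_int e \<le> B"
    and less: "of_int a / of_int b < (of_int c / of_int e :: real)"
  shows "1 / B^2 \<le> of_int c / of_int e - of_int a / of_int b"
proof -
  have pos: "real_of_int b > 0" "real_of_int e > 0" using assms by auto
  have "real_of_int a * of_int e < of_int c * of_int b" using less pos by (simp add: field_simps)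
  then have "a * e < c * b" by (metis of_int_less_iff of_int_mult)
  then have "1 \<le> c * b - a * e" by linarith
  then have num: "1 \<le> real_of_int (c * b - a * e)" by linarith
  have "real_of_int b * of_int e \<le> B^2"
    using assms pos by (simp add: power2_eq_square mult_mono)
  then have "1 / B^2 \<le> 1 / (of_int b * of_int e)" using pos by (simp add: frac_le)
  also have "\<dots> \<le> real_of_int (c * b - a * e) / (of_int b * of_int e)"
    using num pos by (simp add: divide_right_mono)
  also have "\<dots> = of_int c / of_int e - of_int a / of_int b" using pos by (simp add: field_simps)
  finally show ?thesis .
qed

lemma sum_le_except_one:
  fixes f :: "'a \<Rightarrow> real"
  assumes "finite T" "t \<in> T" "\<And>c. c \<in> T - {t} \<Longrightarrow> f c \<le> B" "f t \<le> B'"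
  shows "sum f T \<le> (real (card T) - 1) * B + B'"
proof -
  have "sum f (T - {t}) \<le> real (card (T - {t})) * B" using assms(3) by (rule sum_bounded_above)
  moreover have "real (card (T - {t})) = real (card T) - 1"
  proof -
    have "card T \<ge> 1" using assms(1,2) by (auto simp: Suc_le_eq card_gt_0_iff)
    then show ?thesis using assms(1,2) by (simp add: card_Diff_singleton of_nat_diff)
  qed
  ultimately show ?thesis using assms by (simp add: sum.remove)
qed

lemma sum_ge_except_one:
  fixes f :: "'a \<Rightarrow> real"
  assumes "finite T" "t \<in> T" "\<And>c. c \<in> T - {t} \<Longrightarrow> B \<le> f c" "B' \<le> f t"
  shows "(real (card T) - 1) * B + B' \<le> sum f T"
  using sum_le_except_one[of T t "\<lambda>c. - f c" "- B" "- B'"] assms by (simp add: sum_negf)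

lemma val_in_Ints: "val N E c S \<in> \<int>"
  by (simp add: val_def)

lemma val_le_friends: "val N E c S \<le> real (card N) * real (card (friends N E c \<inter> S))"
  by (simp add: val_def)

lemma val_ge_neg_card:
  assumes "finite N"
  shows "- real (card N) \<le> val N E c S"
proof -
  have "card (enemies N E c \<inter> S) \<le> card N"
    using assms by (intro card_mono) (auto simp: enemies_def)
  then have "real (card (enemies N E c \<inter> S)) \<le> real (card N)" by simp
  moreover have "0 \<le> real (card N) * real (card (friends N E c \<inter> S))" by simp
  ultimately show ?thesis unfolding val_def by linarith
qed

lemma val_sub_le:
  assumes "finite N"
  shows "val N E c C - val N E c P
    \<le> real (card N) * (real (card (friends N E c \<inter> C)) - real (card (friends N E c \<inter> P)))
      + real (card (enemies N E c \<inter> (P - C)))"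
proof -
  have "finite (enemies N E c)" using assms by (simp add: enemies_def)
  then have "card (enemies N E c \<inter> P) \<le> card (enemies N E c \<inter> C \<union> enemies N E c \<inter> (P - C))"
    by (intro card_mono) auto
  also have "\<dots> \<le> card (enemies N E c \<inter> C) + card (enemies N E c \<inter> (P - C))" by (rule card_Un_le)
  finally show ?thesis by (simp add: val_def algebra_simps)
qed

lemma val_sub_le_of_friends_subset:
  assumes "finite N" "friends N E c \<subseteq> P"
  shows "val N E c C - val N E c P \<le> real (card (enemies N E c \<inter> (P - C)))"
proof -
  have "card (friends N E c \<inter> C) \<le> card (friends N E c \<inter> P)"
    using assms by (intro card_mono) (auto simp: friends_def)
  then have "real (card N) * (real (card (friends N E c \<inter> C)) - real (card (friends N E c \<inter> P))) \<le> 0"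
    by (simp add: mult_nonneg_nonpos)
  then show ?thesis using val_sub_le[OF assms(1), of E c C P] by linarith
qed

lemma val_sub_le_of_lost_friend:
  assumes "finite N" "friends N E c \<subseteq> P" "q \<in> friends N E c" "q \<notin> C"
  shows "val N E c C - val N E c P \<le> real (card (enemies N E c \<inter> (P - C))) - real (card N)"
proof -
  have fin: "finite (friends N E c \<inter> P)" using assms(1) by (simp add: friends_def)
  have "q \<in> friends N E c \<inter> P" using assms(2,3) by blast
  then have "card (friends N E c \<inter> P - {q}) = card (friends N E c \<inter> P) - 1"
    and "1 \<le> card (friends N E c \<inter> P)"
    using fin by (auto simp: card_Diff_singleton Suc_le_eq card_gt_0_iff)
  moreover have "card (friends N E c \<inter> C) \<le> card (friends N E c \<inter> P - {q})"
    using fin assms(2,4) by (intro card_mono) auto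
  ultimately have "real (card (friends N E c \<inter> C)) - real (card (friends N E c \<inter> P)) \<le> -1"
    by linarith
  then have "real (card N) * (real (card (friends N E c \<inter> C)) - real (card (friends N E c \<inter> P)))
      \<le> real (card N) * -1"
    by (intro mult_left_mono) auto
  then show ?thesis using val_sub_le[OF assms(1), of E c C P] by linarith
qed

lemma val_le_if_P_subset:
  assumes "finite N" "friends N E c \<subseteq> P" "P \<subseteq> C"
  shows "val N E c C \<le> val N E c P"
proof -
  have "enemies N E c \<inter> (P - C) = {}" using assms(3) by blast
  then have "real (card (enemies N E c \<inter> (P - C))) = 0" by (simp only: card.empty of_nat_0)
  then show ?thesis using val_sub_le_of_friends_subset[OF assms(1,2), of C] by linarith
qed

(* self = True gives the group F_y \<union> {y} averaged by the EQ utility, self = False the group F_y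
   of avg_F in the AL utility. *)
definition friend_group :: "bool \<Rightarrow> 'a set \<Rightarrow> ('a \<Rightarrow> 'a \<Rightarrow> bool) \<Rightarrow> 'a \<Rightarrow> 'a set \<Rightarrow> 'a set" where
  "friend_group self N E y S = S \<inter> friends N E y \<union> (if self then {y} else {})"

definition friend_avg :: "bool \<Rightarrow> 'a set \<Rightarrow> ('a \<Rightarrow> 'a \<Rightarrow> bool) \<Rightarrow> 'a \<Rightarrow> 'a set \<Rightarrow> real" where
  "friend_avg self N E y S = avg (\<lambda>c. val N E c S) (friend_group self N E y S)"

lemma util_avgEQ_eq_friend_avg: "util_avgEQ N E y S = friend_avg True N E y S"
  by (simp add: util_avgEQ_def avg_Fi_def friend_avg_def friend_group_def avg_def)

lemma avg_F_eq_friend_avg: "avg_F N E y S = friend_avg False N E y S"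
  by (simp add: avg_F_def friend_avg_def friend_group_def avg_def)

lemma avg_F_gap:
  assumes "finite N" "card (friends N E y) \<le> k" "1 \<le> k"
    and less: "avg_F N E y C < avg_F N E y P"
  shows "1 / (real k)^2 \<le> avg_F N E y P - avg_F N E y C"
proof -
  have fin: "finite (friends N E y)" using assms(1) by (simp add: friends_def)
  have card_le: "card (S \<inter> friends N E y) \<le> k" for S
    using card_mono[OF fin, of "S \<inter> friends N E y"] assms(2) by simp
  obtain a b :: int where ab: "1 \<le> b" "b \<le> int k"
    "avg (\<lambda>c. val N E c C) (C \<inter> friends N E y) = of_int a / of_int b"
    by (rule avg_Ints_eq_fraction[of _ "\<lambda>c. val N E c C", OF val_in_Ints card_le assms(3)])
  obtain c e :: int where ce: "1 \<le> e" "e \<le> int k"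
    "avg (\<lambda>c. val N E c P) (P \<inter> friends N E y) = of_int c / of_int e"
    by (rule avg_Ints_eq_fraction[of _ "\<lambda>c. val N E c P", OF val_in_Ints card_le assms(3)])
  show ?thesis
    using fraction_gap[of b e "real k" a c] ab ce less
    by (simp add: avg_F_eq_friend_avg friend_avg_def friend_group_def)
qed

lemma util_avgAL_strict_mono:
  assumes "finite N" "card (friends N E y) \<le> k" "1 \<le> k" "k + 1 < card N"
    and w: "real (card N) ^ 4 \<le> w"
    and less: "avg_F N E y C < avg_F N E y P"
  shows "util_avgAL N E w y C < util_avgAL N E w y P"
proof -
  define n where "n = real (card N)"
  have kn: "real k + 1 < n" using assms(4) n_def by linarith
  have w0: "0 \<le> w" using w by (meson order.trans zero_le_power of_nat_0_le_iff)
  have "n^2 * (real k)^2 \<le> n^2 * n^2" using kn by (intro mult_left_mono power_mono) auto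
  also have "\<dots> \<le> w" using w n_def by (simp flip: power_add)
  finally have "n^2 \<le> w * (1 / (real k)^2)" using assms(3) by (simp add: field_simps)
  also have "\<dots> \<le> w * (avg_F N E y P - avg_F N E y C)"
    using avg_F_gap[OF assms(1-3) less] w0 by (intro mult_left_mono)
  finally have gain: "n^2 \<le> w * (avg_F N E y P - avg_F N E y C)" .
  have fin: "finite (friends N E y)" using assms(1) by (simp add: friends_def)
  have "card (friends N E y \<inter> C) \<le> k"
    using card_mono[OF fin, of "friends N E y \<inter> C"] assms(2) by simp
  then have "n * real (card (friends N E y \<inter> C)) \<le> n * real k"
    using n_def by (intro mult_left_mono) auto
  then have "val N E y C \<le> n * real k" using val_le_friends[of N E y C] n_def by simp
  moreover have "- n \<le> val N E y P" using val_ge_neg_card[OF assms(1)] n_def by simp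
  moreover have "n * (real k + 1) < n * n" using kn by (intro mult_strict_left_mono) auto
  then have "n * real k + n < n^2" by (simp add: power2_eq_square algebra_simps)
  ultimately show ?thesis using gain by (simp add: util_avgAL_def algebra_simps)
qed

(* The average of a fringe player's friend group in P: t members, one of them its mid player
   (value at least 2n - |P|, with |P| <= s), the others base players. *)
lemma fringe_average_arith:
  fixes t k d n s :: real
  assumes "k \<le> t" "d + 3 \<le> k" "0 \<le> d" "(k + d + 1) * (d + 1) \<le> n" "s \<le> k + d + 1"
  shows "t * (n * (d + 1)) < (t - 1) * (n * (k - 1) - (d + 1)) + (2 * n - s)"
proof -
  define A where "A = n * (k - 1) - (d + 1)"
  have "(k + d + 1) * 1 \<le> (k + d + 1) * (d + 1)"
    using assms(2,3) by (intro mult_left_mono) auto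
  then have n_ge: "k + d + 1 \<le> n" using assms(4) by simp
  have "n * 1 \<le> n * (k - d - 2)" using assms(2,3) n_ge by (intro mult_left_mono) auto
  then have excess: "0 \<le> A - n * (d + 1)" unfolding A_def using n_ge assms(2,3) by (simp add: algebra_simps)
  have "k * (A - n * (d + 1)) \<le> t * (A - n * (d + 1))"
    using assms(1) excess by (rule mult_right_mono)
  moreover have "0 \<le> k * (k - d - 3)" using assms(2,3) by (intro mult_nonneg_nonneg) auto
  then have "n * 1 \<le> n * ((k - 1) * (k - 1) - k * (d + 1) - 1 + 2)"
    using n_ge assms(2,3) by (intro mult_left_mono) (auto simp: algebra_simps)
  moreover have "(k - 1) * (d + 1) < (k + d + 1) * (d + 1)"
    using assms(3) by (intro mult_strict_right_mono) auto
  ultimately show ?thesis using assms(4,5) n_ge unfolding A_def by (simp add: algebra_simps)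
qed

(* The common shape of both gadgets: top player p, base clique K, fringe players Fr in K, and
   mid c the mid player attached to the fringe player c (the same q for all c in the pinched
   dome). *)
locale generalized_dome =
  fixes N :: "'a set" and E :: "'a \<Rightarrow> 'a \<Rightarrow> bool"
    and P K Fr :: "'a set" and p :: 'a and mid :: "'a \<Rightarrow> 'a"
  assumes finite_N: "finite N"
    and P_subset_N: "P \<subseteq> N"
    and P_eq: "P = insert p (K \<union> mid ` Fr)"
    and top_notin_base: "p \<notin> K"
    and fringe_subset_base: "Fr \<subseteq> K"
    and fringe_nonempty: "Fr \<noteq> {}"
    and mid_notin_base: "c \<in> Fr \<Longrightarrow> mid c \<notin> K"
    and friends_base: "c \<in> K \<Longrightarrow> friends N E c = K - {c} \<union> (if c \<in> Fr then {mid c} else {})"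
    and friends_mid_subset: "c \<in> Fr \<Longrightarrow> friends N E (mid c) \<subseteq> insert p Fr"
    and top_in_friends_mid: "c \<in> Fr \<Longrightarrow> p \<in> friends N E (mid c)"
    and fringe_in_friends_mid: "c \<in> Fr \<Longrightarrow> c \<in> friends N E (mid c)"
begin

abbreviation n :: real where "n \<equiv> real (card N)"
abbreviation \<kappa> :: real where "\<kappa> \<equiv> real (card K)"
abbreviation \<delta> :: real where "\<delta> \<equiv> real (card Fr)"

lemma top_in_P: "p \<in> P" and base_subset_P: "K \<subseteq> P" and mid_in_P: "c \<in> Fr \<Longrightarrow> mid c \<in> P"
  using P_eq by auto

lemma finite_P: "finite P"
  using P_subset_N finite_N by (rule finite_subset)

lemma finite_base: "finite K"
  using base_subset_P finite_P by (rule finite_subset)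

lemma finite_fringe: "finite Fr"
  using fringe_subset_base finite_base by (rule finite_subset)

lemma card_P_minus_base: "card (P - K) \<le> card Fr + 1"
proof -
  have "card (P - K) \<le> card (insert p (mid ` Fr))"
    using P_eq finite_fringe by (intro card_mono) auto
  also have "\<dots> \<le> card Fr + 1"
    using finite_fringe card_image_le[of Fr mid] by (simp add: card_insert_if)
  finally show ?thesis .
qed

lemma card_P: "card P \<le> card K + card Fr + 1"
  using card_Diff_subset[OF finite_base base_subset_P] card_mono[OF finite_P base_subset_P]
    card_P_minus_base by linarith

lemma friends_base_subset_P: "c \<in> K \<Longrightarrow> friends N E c \<subseteq> P"
  using friends_base base_subset_P mid_in_P by auto

lemma friends_mid_subset_P: "c \<in> Fr \<Longrightarrow> friends N E (mid c) \<subseteq> P"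
  using friends_mid_subset top_in_P fringe_subset_base base_subset_P by blast

lemma card_friends_base:
  assumes "c \<in> K"
  shows "card (friends N E c) = card K - 1 + (if c \<in> Fr then 1 else 0)"
proof (cases "c \<in> Fr")
  case True
  then have "mid c \<notin> K - {c}" using mid_notin_base by blast
  then show ?thesis using True friends_base[OF assms] assms finite_base by (simp add: card_Diff_singleton)
qed (use friends_base[OF assms] assms finite_base in \<open>simp add: card_Diff_singleton\<close>)

lemma card_enemies_base:
  assumes "c \<in> K" "X \<subseteq> P"
  shows "card (enemies N E c \<inter> X) \<le> card Fr + 1"
proof -
  have "enemies N E c \<inter> X \<subseteq> P - K"
    using assms friends_base[OF assms(1)] by (auto simp: enemies_def)
  then have "card (enemies N E c \<inter> X) \<le> card (P - K)"
    using finite_P by (intro card_mono) auto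
  then show ?thesis using card_P_minus_base by linarith
qed

lemma val_base_P_ge:
  assumes "c \<in> K"
  shows "n * (\<kappa> - 1) - (\<delta> + 1) + (if c \<in> Fr then n else 0) \<le> val N E c P"
proof -
  have "card K \<ge> 1" using assms finite_base by (auto simp: Suc_le_eq card_gt_0_iff)
  then have "real (card (friends N E c \<inter> P)) = \<kappa> - 1 + (if c \<in> Fr then 1 else 0)"
    using card_friends_base[OF assms] friends_base_subset_P[OF assms] by (simp add: Int_absorb2)
  then have "n * real (card (friends N E c \<inter> P))
      = n * (\<kappa> - 1) + n * (if c \<in> Fr then 1 else 0)"
    by (simp add: distrib_left)
  then show ?thesis using card_enemies_base[OF assms, of P] by (simp add: val_def)
qed

lemma val_mid_P_ge:
  assumes "c \<in> Fr"
  shows "2 * n - real (card P) \<le> val N E (mid c) P"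
proof -
  have "{p, c} \<subseteq> friends N E (mid c) \<inter> P"
    using assms top_in_friends_mid fringe_in_friends_mid top_in_P fringe_subset_base base_subset_P by auto
  moreover have "p \<noteq> c" using assms top_notin_base fringe_subset_base by auto
  ultimately have "card {p, c} \<le> card (friends N E (mid c) \<inter> P)"
    using finite_P by (intro card_mono) auto
  then have "n * 2 \<le> n * real (card (friends N E (mid c) \<inter> P))"
    using \<open>p \<noteq> c\<close> by (intro mult_left_mono) auto
  moreover have "card (enemies N E (mid c) \<inter> P) \<le> card P"
    using finite_P by (intro card_mono) auto
  ultimately show ?thesis by (simp add: val_def)
qed

lemma val_mid_le:
  assumes "c \<in> Fr"
  shows "val N E (mid c) S \<le> n * (\<delta> + 1)"
proof -
  have "card (friends N E (mid c) \<inter> S) \<le> card (insert p Fr)"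
    using friends_mid_subset[OF assms] finite_fringe by (intro card_mono) auto
  also have "\<dots> \<le> card Fr + 1" using finite_fringe by (simp add: card_insert_if)
  finally have "n * real (card (friends N E (mid c) \<inter> S)) \<le> n * (\<delta> + 1)"
    by (intro mult_left_mono) auto
  then show ?thesis using val_le_friends[of N E "mid c" S] by linarith
qed

lemma val_base_le:
  assumes "c \<in> C" "c \<in> K"
  shows "val N E c C \<le> n * real (card (C \<inter> K))"
proof -
  have "card (friends N E c \<inter> C) \<le> card (insert (mid c) (C \<inter> K - {c}))"
    using friends_base[OF assms(2)] finite_base by (intro card_mono) auto
  also have "\<dots> \<le> Suc (card (C \<inter> K - {c}))"
    using finite_base by (simp add: card_insert_if)
  also have "\<dots> = card (C \<inter> K)"
  proof -
    have "card (C \<inter> K) > 0" using assms finite_base by (auto simp: card_gt_0_iff)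
    then show ?thesis using assms by (simp add: card_Diff_singleton)
  qed
  finally have "n * real (card (friends N E c \<inter> C)) \<le> n * real (card (C \<inter> K))"
    by (intro mult_left_mono) auto
  then show ?thesis using val_le_friends[of N E c C] by linarith
qed

lemma friend_group_nonfringe:
  assumes "y \<in> K" "y \<notin> Fr" "K - {y} \<subseteq> S"
  shows "friend_group self N E y S = K - {y} \<union> (if self then {y} else {})"
  using assms friends_base[OF assms(1)] by (auto simp: friend_group_def)

lemma friend_group_fringe:
  assumes "y \<in> Fr" "insert (mid y) (K - {y}) \<subseteq> S"
  shows "friend_group self N E y S = insert (mid y) (K - {y}) \<union> (if self then {y} else {})"
  using assms friends_base[of y] fringe_subset_base by (auto simp: friend_group_def)

end

lemma friends_eq_within:
  assumes "P \<subseteq> N" "x \<in> P - {p}" "\<forall>x \<in> P - {p}. \<forall>y \<in> N - P. \<not> E x y"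
  shows "friends N E x = {y \<in> P. E x y}"
  using assms by (auto simp: friends_def)

context
  fixes N :: "'a set" and E :: "'a \<Rightarrow> 'a \<Rightarrow> bool" and d k' :: nat and P K :: "'a set"
    and p :: 'a and m fr :: "nat \<Rightarrow> 'a"
  assumes dome: "dome_gadget N E d k' P p m K fr"
begin

lemma dome_gadgetD:
  "1 \<le> d" "P \<subseteq> N" "card P = k'" "p \<in> P" "inj_on m {1..d}" "inj_on fr {1..d}"
  "m ` {1..d} \<subseteq> P" "p \<notin> m ` {1..d}" "K = P - {p} - m ` {1..d}" "fr ` {1..d} \<subseteq> K"
  using dome unfolding dome_gadget_def by auto

lemma dome_adjacent_iff:
  assumes "x \<in> P" "y \<in> P"
  shows "E x y \<longleftrightarrow>
    (\<exists>j\<in>{1..d}. {x, y} = {p, m j} \<or> {x, y} = {m j, fr j}) \<or> (x \<in> K \<and> y \<in> K \<and> x \<noteq> y)"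
  using dome assms unfolding dome_gadget_def by blast

lemma dome_mid_fringe:
  assumes "j \<in> {1..d}"
  shows "m j \<in> P" "m j \<notin> K" "m j \<noteq> p" "fr j \<in> K" "fr j \<in> P"
  using assms dome_gadgetD(4,7-10) by blast+

lemma dome_card_base:
  assumes "finite N"
  shows "card K = k' - d - 1"
proof -
  have "P - K = insert p (m ` {1..d})" "K \<subseteq> P" using dome_gadgetD(4,7,9) by auto
  moreover have "card (insert p (m ` {1..d})) = d + 1"
    using dome_gadgetD(5,8) by (simp add: card_image)
  moreover have "finite P" using dome_gadgetD(2) assms by (rule finite_subset)
  then have "card (P - K) = card P - card K" "card K \<le> card P"
    using \<open>K \<subseteq> P\<close> by (auto intro: card_Diff_subset card_mono finite_subset)
  ultimately show ?thesis using dome_gadgetD(3) by simp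
qed

context
  assumes isolated: "\<forall>x \<in> P - {p}. \<forall>y \<in> N - P. \<not> E x y"
begin

lemma dome_friends: "x \<in> P - {p} \<Longrightarrow> friends N E x = {y \<in> P. E x y}"
  using friends_eq_within[OF dome_gadgetD(2) _ isolated] .

lemma dome_friends_mid:
  assumes j: "j \<in> {1..d}"
  shows "friends N E (m j) = {p, fr j}"
proof (intro equalityI subsetI)
  fix y assume "y \<in> friends N E (m j)"
  then have "y \<in> P" "E (m j) y" using dome_friends dome_mid_fringe[OF j] by auto
  then obtain i where i: "i \<in> {1..d}" "{m j, y} = {p, m i} \<or> {m j, y} = {m i, fr i}"
    using dome_adjacent_iff[of "m j" y] dome_mid_fringe[OF j] by auto
  have "m j \<noteq> fr i" "m i = m j \<longleftrightarrow> i = j"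
    using dome_mid_fringe[OF i(1)] dome_mid_fringe[OF j] dome_gadgetD(5) i(1) j
    by (auto dest: inj_onD)
  then show "y \<in> {p, fr j}" using i dome_mid_fringe[OF j] by (auto simp: doubleton_eq_iff)
next
  have "{m j, p} = {p, m j}" by (simp add: insert_commute)
  then have "E (m j) p" "E (m j) (fr j)"
    using dome_adjacent_iff dome_mid_fringe[OF j] dome_gadgetD(4) j by blast+
  moreover fix y assume "y \<in> {p, fr j}"
  ultimately show "y \<in> friends N E (m j)"
    using dome_friends dome_mid_fringe[OF j] dome_gadgetD(4) by auto
qed

lemma dome_friends_base:
  assumes "c \<in> K"
  shows "friends N E c = K - {c} \<union> m ` {j \<in> {1..d}. fr j = c}"
proof -
  have c: "c \<in> P - {p}" "c \<notin> m ` {1..d}" using assms dome_gadgetD(9) by auto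
  have "E c y \<longleftrightarrow> y \<in> K - {c} \<or> (\<exists>j\<in>{1..d}. c = fr j \<and> y = m j)" if "y \<in> P" for y
    using dome_adjacent_iff[OF _ that, of c] c assms by (auto simp: doubleton_eq_iff)
  moreover have "K \<subseteq> P" using dome_gadgetD(9) by blast
  ultimately show ?thesis using dome_friends[OF c(1)] dome_mid_fringe(1) by blast
qed

lemma dome_generalized_dome:
  assumes "finite N"
  shows "generalized_dome N E P K (fr ` {1..d}) p (\<lambda>c. m (inv_into {1..d} fr c))"
proof unfold_locales
  have mid: "m ` {1..d} = (\<lambda>c. m (inv_into {1..d} fr c)) ` fr ` {1..d}"
    using dome_gadgetD(6) by (simp add: image_image)
  show "finite N" "P \<subseteq> N" using assms dome_gadgetD(2) by auto
  show "P = insert p (K \<union> (\<lambda>c. m (inv_into {1..d} fr c)) ` fr ` {1..d})"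
    using dome_gadgetD(4,7,9) mid by auto
  show "p \<notin> K" "fr ` {1..d} \<subseteq> K" "fr ` {1..d} \<noteq> {}" using dome_gadgetD(1,9,10) by auto
next
  fix c assume "c \<in> fr ` {1..d}"
  then obtain j where j: "j \<in> {1..d}" "c = fr j" by blast
  then have mid_c: "m (inv_into {1..d} fr c) = m j" using dome_gadgetD(6) by simp
  show "m (inv_into {1..d} fr c) \<notin> K"
    "friends N E (m (inv_into {1..d} fr c)) \<subseteq> insert p (fr ` {1..d})"
    "p \<in> friends N E (m (inv_into {1..d} fr c))" "c \<in> friends N E (m (inv_into {1..d} fr c))"
    using mid_c j dome_mid_fringe[OF j(1)] dome_friends_mid[OF j(1)] by auto
next
  fix c assume "c \<in> K"
  have "{j \<in> {1..d}. fr j = c} = (if c \<in> fr ` {1..d} then {inv_into {1..d} fr c} else {})"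
    using dome_gadgetD(6) by (auto simp: inj_on_eq_iff intro: inv_into_f_eq)
  then show "friends N E c = K - {c} \<union> (if c \<in> fr ` {1..d} then {m (inv_into {1..d} fr c)} else {})"
    using dome_friends_base[OF \<open>c \<in> K\<close>] by auto
qed

end

end

context
  fixes N :: "'a set" and E :: "'a \<Rightarrow> 'a \<Rightarrow> bool" and d k' :: nat and P K :: "'a set"
    and p q :: 'a and fr :: "nat \<Rightarrow> 'a"
  assumes pinched: "pinched_dome_gadget N E d k' P p q K fr"
begin

lemma pinched_dome_gadgetD:
  "1 \<le> d" "P \<subseteq> N" "p \<noteq> q" "p \<notin> K" "q \<notin> K" "P = insert p (insert q K)"
  "inj_on fr {1..d}" "fr ` {1..d} \<subseteq> K" "card K = k' - d - 1"
  using pinched unfolding pinched_dome_gadget_def by auto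

lemma pinched_adjacent_iff:
  assumes "x \<in> P" "y \<in> P"
  shows "E x y \<longleftrightarrow>
    {x, y} = {p, q} \<or> (\<exists>j\<in>{1..d}. {x, y} = {q, fr j}) \<or> (x \<in> K \<and> y \<in> K \<and> x \<noteq> y)"
  using pinched assms unfolding pinched_dome_gadget_def by blast

context
  assumes isolated: "\<forall>x \<in> P - {p}. \<forall>y \<in> N - P. \<not> E x y"
begin

lemma pinched_friends: "x \<in> P - {p} \<Longrightarrow> friends N E x = {y \<in> P. E x y}"
  using friends_eq_within[OF pinched_dome_gadgetD(2) _ isolated] .

lemma pinched_friends_mid: "friends N E q = insert p (fr ` {1..d})"
proof -
  have q: "q \<in> P - {p}" using pinched_dome_gadgetD(3,6) by blast
  have "E q y \<longleftrightarrow> y \<in> insert p (fr ` {1..d})" if "y \<in> P" for y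
    using pinched_adjacent_iff[OF _ that, of q] q pinched_dome_gadgetD(5)
    by (auto simp: doubleton_eq_iff)
  then show ?thesis using pinched_friends[OF q] pinched_dome_gadgetD(6,8) by auto
qed

lemma pinched_friends_base:
  assumes "c \<in> K"
  shows "friends N E c = K - {c} \<union> (if c \<in> fr ` {1..d} then {q} else {})"
proof -
  have c: "c \<in> P - {p}" "c \<noteq> q" using assms pinched_dome_gadgetD(4-6) by auto
  have "E c y \<longleftrightarrow> y \<in> K - {c} \<or> (c \<in> fr ` {1..d} \<and> y = q)" if "y \<in> P" for y
    using pinched_adjacent_iff[OF _ that, of c] c assms pinched_dome_gadgetD(4)
    by (auto simp: doubleton_eq_iff)
  then show ?thesis using pinched_friends[OF c(1)] pinched_dome_gadgetD(6) by auto
qed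

lemma pinched_generalized_dome:
  assumes "finite N"
  shows "generalized_dome N E P K (fr ` {1..d}) p (\<lambda>_. q)"
proof unfold_locales
  show "finite N" "P \<subseteq> N" using assms pinched_dome_gadgetD(2) by auto
  show Fr: "fr ` {1..d} \<noteq> {}" using pinched_dome_gadgetD(1) by auto
  then have "(\<lambda>_. q) ` fr ` {1..d} = {q}" by (simp add: image_constant_conv)
  then show "P = insert p (K \<union> (\<lambda>_. q) ` fr ` {1..d})" using pinched_dome_gadgetD(6) by auto
  show "p \<notin> K" "fr ` {1..d} \<subseteq> K" using pinched_dome_gadgetD(4,8) by auto
qed (use pinched_dome_gadgetD(3,5) pinched_friends_mid pinched_friends_base in auto)

end

end

(* With d = |Fr| and k' = |K| + d + 1 these are the hypotheses k' > 2d + 3 and n >= k' (d + 1). *)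
locale large_generalized_dome = generalized_dome +
  assumes fringe_small: "card Fr + 3 \<le> card K"
    and players_many: "(card K + card Fr + 1) * (card Fr + 1) \<le> card N"
begin

lemma players_many_real: "(\<kappa> + \<delta> + 1) * (\<delta> + 1) \<le> n"
proof -
  have "(\<kappa> + \<delta> + 1) * (\<delta> + 1) = real ((card K + card Fr + 1) * (card Fr + 1))"
    by (simp only: of_nat_mult of_nat_add of_nat_1)
  also have "\<dots> \<le> n" by (simp only: of_nat_le_iff players_many)
  finally show ?thesis .
qed

lemma base_times_fringe_lt: "\<kappa> * (\<delta> + 1) < n"
proof -
  have "\<kappa> * (\<delta> + 1) < (\<kappa> + \<delta> + 1) * (\<delta> + 1)" by (intro mult_strict_right_mono) auto
  then show ?thesis using players_many_real by linarith
qed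

lemma exists_nonfringe: obtains y where "y \<in> K" "y \<notin> Fr"
proof -
  have "\<not> K \<subseteq> Fr"
  proof
    assume "K \<subseteq> Fr"
    then have "card K \<le> card Fr" by (rule card_mono[OF finite_fringe])
    then show False using fringe_small by linarith
  qed
  then show ?thesis using that by blast
qed

lemma nonfringe_member_prefers_P:
  assumes "y \<in> C" "y \<in> K" "y \<notin> Fr" "\<not> K \<subseteq> C"
  shows "friend_avg self N E y C < friend_avg self N E y P"
proof -
  have "card (C \<inter> K) < card K" using assms(4) finite_base by (intro psubset_card_mono) auto
  then have CK: "n * real (card (C \<inter> K)) \<le> n * (\<kappa> - 1)" by (intro mult_left_mono) auto
  have "friend_avg self N E y C \<le> n * (\<kappa> - 1)"
    unfolding friend_avg_def
  proof (intro avg_le_bound)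
    fix c assume "c \<in> friend_group self N E y C"
    then have "c \<in> C" "c \<in> K"
      using assms friends_base[OF assms(2)] by (auto simp: friend_group_def split: if_splits)
    then show "val N E c C \<le> n * (\<kappa> - 1)" using val_base_le CK by (meson order.trans)
  qed (use fringe_small in auto)
  moreover have "n * (\<kappa> - 1) < friend_avg self N E y P"
  proof -
    define T where "T = friend_group self N E y P"
    have T: "T = K - {y} \<union> (if self then {y} else {})"
      unfolding T_def using assms(2,3) base_subset_P by (intro friend_group_nonfringe) auto
    obtain f0 where "f0 \<in> Fr" using fringe_nonempty by blast
    then have f0: "f0 \<in> T" using T assms(3) fringe_subset_base by auto
    have "T \<subseteq> K" using T assms(2) by auto
    then have "real (card T) * (\<delta> + 1) \<le> \<kappa> * (\<delta> + 1)"
      using card_mono[OF finite_base] by (intro mult_right_mono) auto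
    then have "real (card T) * (\<delta> + 1) < n" using base_times_fringe_lt by linarith
    moreover have "(real (card T) - 1) * (n * (\<kappa> - 1) - (\<delta> + 1)) + (n * (\<kappa> - 1) - (\<delta> + 1) + n)
        \<le> sum (\<lambda>c. val N E c P) T"
    proof (rule sum_ge_except_one[OF finite_subset[OF \<open>T \<subseteq> K\<close> finite_base] f0])
      fix c assume "c \<in> T - {f0}"
      then show "n * (\<kappa> - 1) - (\<delta> + 1) \<le> val N E c P"
        using \<open>T \<subseteq> K\<close> val_base_P_ge[of c] by (auto split: if_splits)
    qed (use val_base_P_ge[of f0] \<open>f0 \<in> Fr\<close> fringe_subset_base in auto)
    ultimately have "real (card T) * (n * (\<kappa> - 1)) < sum (\<lambda>c. val N E c P) T"
      by (simp add: algebra_simps)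
    then show ?thesis unfolding friend_avg_def T_def[symmetric] by (rule avg_gt_bound)
  qed
  ultimately show ?thesis by linarith
qed

lemma fringe_friend_avg_P_gt:
  assumes "x \<in> Fr"
  shows "n * (\<delta> + 1) < friend_avg self N E x P"
proof -
  define T where "T = friend_group self N E x P"
  have xK: "x \<in> K" using assms fringe_subset_base by blast
  have T: "T = insert (mid x) (K - {x}) \<union> (if self then {x} else {})"
    unfolding T_def using assms base_subset_P mid_in_P by (intro friend_group_fringe) auto
  have mid_T: "mid x \<in> T" using T by blast
  have T_base: "T - {mid x} \<subseteq> K" using T xK by auto
  have fin: "finite T" using T finite_base by simp
  have "card K > 0" using xK finite_base card_gt_0_iff by blast
  then have "card (insert (mid x) (K - {x})) = card K"
    using xK finite_base mid_notin_base[OF assms] by (simp add: card_Diff_singleton)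
  moreover have "card (insert (mid x) (K - {x})) \<le> card T"
    using T by (intro card_mono[OF fin]) auto
  ultimately have "\<kappa> \<le> real (card T)" by simp
  moreover have "(real (card T) - 1) * (n * (\<kappa> - 1) - (\<delta> + 1)) + (2 * n - real (card P))
      \<le> sum (\<lambda>c. val N E c P) T"
  proof (rule sum_ge_except_one[OF fin mid_T])
    fix c assume "c \<in> T - {mid x}"
    then show "n * (\<kappa> - 1) - (\<delta> + 1) \<le> val N E c P"
      using T_base val_base_P_ge[of c] by (auto split: if_splits)
  qed (rule val_mid_P_ge[OF assms])
  moreover have "real (card P) \<le> \<kappa> + \<delta> + 1" using card_P by simp
  ultimately have "real (card T) * (n * (\<delta> + 1)) < sum (\<lambda>c. val N E c P) T"
    using fringe_average_arith[of \<kappa> "real (card T)" \<delta> n "real (card P)"] fringe_small players_many_real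
    by simp
  then show ?thesis unfolding friend_avg_def T_def[symmetric] by (rule avg_gt_bound)
qed

lemma fringe_member_prefers_P:
  assumes "x \<in> C" "x \<in> K" "C \<inter> K \<subseteq> Fr"
  shows "friend_avg self N E x C < friend_avg self N E x P"
proof -
  have xF: "x \<in> Fr" using assms by blast
  have "card (C \<inter> K) \<le> card Fr" using assms(3) finite_fringe by (rule card_mono[rotated])
  then have CK: "n * real (card (C \<inter> K)) \<le> n * (\<delta> + 1)" by (intro mult_left_mono) auto
  have "friend_avg self N E x C \<le> n * (\<delta> + 1)"
    unfolding friend_avg_def
  proof (intro avg_le_bound)
    fix c assume "c \<in> friend_group self N E x C"
    then have "c = mid x \<or> (c \<in> C \<and> c \<in> K)"
      using assms friends_base[OF assms(2)] by (auto simp: friend_group_def split: if_splits)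
    then show "val N E c C \<le> n * (\<delta> + 1)"
      using val_mid_le[OF xF] val_base_le[of c C] CK by auto
  qed simp
  then show ?thesis using fringe_friend_avg_P_gt[OF xF, of self] by linarith
qed

lemma mid_outside_nonfringe_prefers_P:
  assumes "K \<subseteq> C" "y \<in> K" "y \<notin> Fr" "c \<in> Fr" "mid c \<notin> C"
  shows "friend_avg self N E y C < friend_avg self N E y P"
proof -
  define T where "T = friend_group self N E y P"
  have T: "T = K - {y} \<union> (if self then {y} else {})"
    unfolding T_def using assms(2,3) base_subset_P by (intro friend_group_nonfringe) auto
  have T_C: "friend_group self N E y C = T"
    unfolding T using assms by (intro friend_group_nonfringe) auto
  have "T \<subseteq> K" "c \<in> T" using T assms fringe_subset_base by auto
  have fin: "finite T" using \<open>T \<subseteq> K\<close> finite_base by (rule finite_subset)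
  have "sum (\<lambda>c. val N E c C - val N E c P) T \<le> (real (card T) - 1) * (\<delta> + 1) + ((\<delta> + 1) - n)"
  proof (rule sum_le_except_one[OF fin \<open>c \<in> T\<close>])
    fix c' assume "c' \<in> T - {c}"
    then have "c' \<in> K" using \<open>T \<subseteq> K\<close> by blast
    then have "real (card (enemies N E c' \<inter> (P - C))) \<le> \<delta> + 1"
      using card_enemies_base[of c' "P - C"] by (simp add: of_nat_le_iff flip: of_nat_Suc)
    then show "val N E c' C - val N E c' P \<le> \<delta> + 1"
      using val_sub_le_of_friends_subset[OF finite_N friends_base_subset_P[OF \<open>c' \<in> K\<close>], of C]
      by linarith
  next
    have "c \<in> K" "mid c \<in> friends N E c" using assms(4) fringe_subset_base friends_base by auto
    moreover have "real (card (enemies N E c \<inter> (P - C))) \<le> \<delta> + 1"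
      using \<open>c \<in> K\<close> card_enemies_base[of c "P - C"] by (simp add: of_nat_le_iff flip: of_nat_Suc)
    ultimately show "val N E c C - val N E c P \<le> (\<delta> + 1) - n"
      using val_sub_le_of_lost_friend[OF finite_N friends_base_subset_P _ assms(5)] by fastforce
  qed
  also have "\<dots> < 0"
  proof -
    have "real (card T) * (\<delta> + 1) \<le> \<kappa> * (\<delta> + 1)"
      using card_mono[OF finite_base \<open>T \<subseteq> K\<close>] by (intro mult_right_mono) auto
    then show ?thesis using base_times_fringe_lt by (simp add: algebra_simps)
  qed
  finally have "sum (\<lambda>c. val N E c C) T < sum (\<lambda>c. val N E c P) T" by (simp add: sum_subtractf)
  then show ?thesis unfolding friend_avg_def T_C T_def[symmetric] by (rule avg_strict_mono)
qed

lemma top_outside_fringe_prefers_P: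
  assumes "K \<subseteq> C" "mid ` Fr \<subseteq> C" "p \<notin> C" "y \<in> Fr"
  shows "friend_avg self N E y C < friend_avg self N E y P"
proof -
  define T where "T = friend_group self N E y P"
  have T: "T = insert (mid y) (K - {y}) \<union> (if self then {y} else {})"
    unfolding T_def using assms(4) base_subset_P mid_in_P by (intro friend_group_fringe) auto
  have T_C: "friend_group self N E y C = T"
    unfolding T using assms by (intro friend_group_fringe) auto
  have mid_T: "mid y \<in> T" and T_base: "T - {mid y} \<subseteq> K"
    using T assms(4) fringe_subset_base by auto
  have fin: "finite T" using T finite_base by simp
  have P_C: "P - C \<subseteq> {p}" using P_eq assms(1,2) by auto
  have "sum (\<lambda>c. val N E c C - val N E c P) T \<le> (real (card T) - 1) * 1 + (0 - n)"
  proof (rule sum_le_except_one[OF fin mid_T])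
    fix c assume "c \<in> T - {mid y}"
    then have "c \<in> K" using T_base by blast
    moreover have "card (enemies N E c \<inter> (P - C)) \<le> card {p}"
      using P_C by (intro card_mono) auto
    ultimately show "val N E c C - val N E c P \<le> 1"
      using val_sub_le_of_friends_subset[OF finite_N friends_base_subset_P, of c C] by simp
  next
    have "enemies N E (mid y) \<inter> (P - C) = {}"
      using P_C top_in_friends_mid[OF assms(4)] by (auto simp: enemies_def)
    then show "val N E (mid y) C - val N E (mid y) P \<le> 0 - n"
      using val_sub_le_of_lost_friend[OF finite_N friends_mid_subset_P[OF assms(4)]
          top_in_friends_mid[OF assms(4)] assms(3)] by simp
  qed
  also have "\<dots> < 0"
  proof -
    have "T \<subseteq> P" using T assms(4) base_subset_P mid_in_P fringe_subset_base by auto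
    then have "card T \<le> card N" using P_subset_N by (intro card_mono[OF finite_N]) auto
    then show ?thesis by simp
  qed
  finally have "sum (\<lambda>c. val N E c C) T < sum (\<lambda>c. val N E c P) T" by (simp add: sum_subtractf)
  then show ?thesis unfolding friend_avg_def T_C T_def[symmetric] by (rule avg_strict_mono)
qed

lemma base_subset_if_no_member_prefers_P:
  assumes no_pref: "\<And>y. y \<in> C \<inter> K \<Longrightarrow> \<not> friend_avg self N E y C < friend_avg self N E y P"
    and "C \<inter> K \<noteq> {}"
  shows "K \<subseteq> C"
proof (rule ccontr)
  assume "\<not> K \<subseteq> C"
  show False
  proof (cases "C \<inter> K \<subseteq> Fr")
    case True
    obtain x where "x \<in> C \<inter> K" using assms(2) by blast
    then show False using no_pref fringe_member_prefers_P[OF _ _ True] by blast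
  next
    case False
    then obtain y where "y \<in> C \<inter> K" "y \<notin> Fr" by blast
    then show False using no_pref nonfringe_member_prefers_P \<open>\<not> K \<subseteq> C\<close> by blast
  qed
qed

lemma P_subset_if_no_member_prefers_P:
  assumes no_pref: "\<And>y. y \<in> K \<Longrightarrow> \<not> friend_avg self N E y C < friend_avg self N E y P"
    and "K \<subseteq> C"
  shows "P \<subseteq> C"
proof -
  obtain y where "y \<in> K" "y \<notin> Fr" by (rule exists_nonfringe)
  then have mids: "mid ` Fr \<subseteq> C"
    using no_pref mid_outside_nonfringe_prefers_P[OF \<open>K \<subseteq> C\<close>] by blast
  obtain x where "x \<in> Fr" using fringe_nonempty by blast
  then have "p \<in> C"
    using no_pref top_outside_fringe_prefers_P[OF \<open>K \<subseteq> C\<close> mids] fringe_subset_base by blast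
  then show ?thesis using P_eq mids \<open>K \<subseteq> C\<close> by blast
qed

lemma friend_avg_le_if_P_subset:
  assumes "P \<subseteq> C" "y \<in> K"
  shows "friend_avg self N E y C \<le> friend_avg self N E y P"
proof -
  have group: "friend_group self N E y C = friend_group self N E y P"
    using assms friends_base_subset_P[OF assms(2)] by (auto simp: friend_group_def)
  have "val N E c C \<le> val N E c P" if "c \<in> friend_group self N E y P" for c
  proof -
    have "c \<in> K \<or> c \<in> mid ` Fr"
      using that assms(2) friends_base[OF assms(2)] by (auto simp: friend_group_def split: if_splits)
    then have "friends N E c \<subseteq> P" using friends_base_subset_P friends_mid_subset_P by blast
    then show ?thesis using val_le_if_P_subset[OF finite_N _ assms(1)] by blast
  qed
  then show ?thesis unfolding friend_avg_def group by (intro avg_mono sum_mono)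
qed

theorem improving_coalition_avoids_base:
  fixes U :: "'a \<Rightarrow> 'a set \<Rightarrow> real"
  assumes strict: "\<And>y. y \<in> K \<Longrightarrow> friend_avg self N E y C < friend_avg self N E y P \<Longrightarrow>
        U y C < U y P"
    and weak: "\<And>y. y \<in> K \<Longrightarrow> friend_avg self N E y C \<le> friend_avg self N E y P \<Longrightarrow>
        val N E y C \<le> val N E y P \<Longrightarrow> U y C \<le> U y P"
    and improving: "\<And>y. y \<in> C \<inter> K \<Longrightarrow> U y P < U y C"
  shows "C \<inter> K = {}"
proof (rule ccontr)
  assume "C \<inter> K \<noteq> {}"
  have no_pref: "\<not> friend_avg self N E y C < friend_avg self N E y P" if "y \<in> C \<inter> K" for y
    using strict improving that by fastforce
  have "K \<subseteq> C" using no_pref \<open>C \<inter> K \<noteq> {}\<close> by (rule base_subset_if_no_member_prefers_P)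
  then have "P \<subseteq> C" using no_pref by (intro P_subset_if_no_member_prefers_P) auto
  obtain y where y: "y \<in> C \<inter> K" using \<open>C \<inter> K \<noteq> {}\<close> by blast
  have "U y C \<le> U y P"
    using y weak friend_avg_le_if_P_subset[OF \<open>P \<subseteq> C\<close>]
      val_le_if_P_subset[OF finite_N friends_base_subset_P \<open>P \<subseteq> C\<close>] by blast
  then show False using improving[OF y] by linarith
qed

theorem avg_improving_coalition_avoids_base:
  assumes util: "util = util_avgEQ N E \<or> (util = util_avgAL N E w \<and> n ^ 4 \<le> w)"
    and improving: "\<And>y. y \<in> C \<inter> K \<Longrightarrow> util y P < util y C"
  shows "C \<inter> K = {}"
  using util
proof
  assume "util = util_avgEQ N E"
  then show ?thesis
    using improving_coalition_avoids_base[where self = True and U = util] improving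
    by (simp add: util_avgEQ_eq_friend_avg)
next
  assume AL: "util = util_avgAL N E w \<and> n ^ 4 \<le> w"
  then have "0 \<le> w" by (meson order.trans zero_le_power of_nat_0_le_iff)
  have "0 < card Fr" using fringe_nonempty finite_fringe by (simp add: card_gt_0_iff)
  moreover have "card K + card Fr + 1 \<le> (card K + card Fr + 1) * (card Fr + 1)" by simp
  ultimately have K_small: "1 \<le> card K" "card K + 1 < card N"
    using fringe_small players_many by linarith+
  show ?thesis
  proof (rule improving_coalition_avoids_base[where self = False and U = util])
    fix y assume "y \<in> K" and "friend_avg False N E y C < friend_avg False N E y P"
    moreover have "card (friends N E y) \<le> card K"
      using card_friends_base[OF \<open>y \<in> K\<close>] K_small by simp
    ultimately show "util y C < util y P"
      using AL util_avgAL_strict_mono[OF finite_N _ K_small] by (simp add: avg_F_eq_friend_avg)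
  next
    fix y assume "friend_avg False N E y C \<le> friend_avg False N E y P" "val N E y C \<le> val N E y P"
    then show "util y C \<le> util y P"
      using AL \<open>0 \<le> w\<close> by (simp add: util_avgAL_def avg_F_eq_friend_avg add_mono mult_left_mono)
  qed (rule improving)
qed

end

lemma coal_of_eq:
  assumes "disjoint \<Gamma>" "P \<in> \<Gamma>" "y \<in> P"
  shows "coal_of \<Gamma> y = P"
  unfolding coal_of_def
proof (rule the1_equality)
  show "\<exists>!S. S \<in> \<Gamma> \<and> y \<in> S"
    using assms by (metis disjointD disjoint_iff)
qed (use assms in auto)

lemma large_generalized_dome_of_gadget:
  assumes "finite N" "2 * d + 3 < k'" "k' * (d + 1) \<le> card N"
    and gadget: "(\<exists>m fr. dome_gadget N E d k' P p m K fr) \<or>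
                 (\<exists>q fr. pinched_dome_gadget N E d k' P p q K fr)"
    and isolated: "\<forall>x \<in> P - {p}. \<forall>y \<in> N - P. \<not> E x y"
  obtains Fr mid where "large_generalized_dome N E P K Fr p mid"
proof -
  obtain Fr mid where dome: "generalized_dome N E P K Fr p mid" "card Fr = d" "card K = k' - d - 1"
  proof (cases "\<exists>m fr. dome_gadget N E d k' P p m K fr")
    case True
    then obtain m fr where g: "dome_gadget N E d k' P p m K fr" by blast
    show ?thesis
    proof (rule that)
      show "generalized_dome N E P K (fr ` {1..d}) p (\<lambda>c. m (inv_into {1..d} fr c))"
        using g isolated assms(1) by (rule dome_generalized_dome)
      show "card (fr ` {1..d}) = d"
        using dome_gadgetD(6)[OF g] by (simp add: card_image)
      show "card K = k' - d - 1" using g assms(1) by (rule dome_card_base)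
    qed
  next
    case False
    then obtain q fr where g: "pinched_dome_gadget N E d k' P p q K fr" using gadget by blast
    show ?thesis
    proof (rule that)
      show "generalized_dome N E P K (fr ` {1..d}) p (\<lambda>_. q)"
        using g isolated assms(1) by (rule pinched_generalized_dome)
      show "card (fr ` {1..d}) = d" "card K = k' - d - 1"
        using pinched_dome_gadgetD(7,9)[OF g] by (simp_all add: card_image)
    qed
  qed
  have "card K + card Fr + 1 = k'" using dome(2,3) assms(2) by linarith
  then have "large_generalized_dome N E P K Fr p mid"
    using dome assms(2,3) by (intro large_generalized_dome.intro large_generalized_dome_axioms.intro) auto
  then show ?thesis by (rule that)
qed

theorem proposition1:
  fixes N :: "'a set" and E :: "'a \<Rightarrow> 'a \<Rightarrow> bool"
    and util :: "'a \<Rightarrow> 'a set \<Rightarrow> real" and w :: real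
    and d k' :: nat and P K C :: "'a set" and p :: 'a and \<Gamma> :: "'a set set"
  assumes finN: "finite N"
    and symE: "\<forall>x y. E x y \<longrightarrow> E y x"
    and irrE: "\<forall>x. \<not> E x x"
    and d1: "d \<ge> 1"
    and kd: "k' > 2*d+3"
    and nk: "card N \<ge> k' * (d+1)"
    and util: "util = util_avgEQ N E \<or> (util = util_avgAL N E w \<and> w \<ge> real (card N) ^ 4)"
    and gadget: "(\<exists>m fr. dome_gadget N E d k' P p m K fr) \<or>
                 (\<exists>q fr. pinched_dome_gadget N E d k' P p q K fr)"
    and isolated: "\<forall>x \<in> P - {p}. \<forall>y \<in> N - P. \<not> E x y"
    and part: "partition_on N \<Gamma>"
    and PG: "P \<in> \<Gamma>"
    and blk: "blocks N util \<Gamma> C"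
  shows "C \<inter> K = {}"
proof -
  obtain Fr mid where "large_generalized_dome N E P K Fr p mid"
    using large_generalized_dome_of_gadget[OF finN kd nk gadget isolated] .
  then interpret large_generalized_dome N E P K Fr p mid .
  have "util y P < util y C" if "y \<in> C \<inter> K" for y
  proof -
    have "coal_of \<Gamma> y = P" using coal_of_eq[OF partition_onD2[OF part] PG] that base_subset_P by blast
    then show ?thesis using blk that unfolding blocks_def by auto
  qed
  with util show ?thesis by (rule avg_improving_coalition_avoids_base)
qed

end
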